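(* Let $\mathbf{T}=(T_1,\dots,T_m)$ and $\mathbf{T}^0=(T^0_1,\dots,T^0_m)$ be real random vectors and $\mathcal{H}_0\subset[m]$ such that for every $i\in\mathcal{H}_0$, $(T_i,T_i^0\mid\mathbf{T}_{-i},\mathbf{T}^0_{-i})\stackrel{d}{=}(T_i^0,T_i\mid\mathbf{T}_{-i},\mathbf{T}^0_{-i})$. Define $g(t)=\hat f_0(t)/\hat f_{mix}(t)$, where $$\hat f_{mix}(t)=\frac{1}{2m}\sum_{i=1}^m\big[K_{h_{mix}}(t-T_i)+K_{h_{mix}}(t-T_i^0)\big],$$ $K_h(t)=h^{-1}K(t/h)$ for a symmetric kernel $K$ with $\int K=1$, $\int tK(t)dt=0$, $\int t^2K(t)dt<\infty$, and the bandwidth $h_{mix}=h_{mix}(\mathbf{T},\mathbf{T}^0)$ is invariant under every permutation of the $2m$ entries of $(T_1,\dots,T_m,T^0_1,\dots,T^0_m)$; and $\hat f_0$ is one of the following two estimators: (KN) with $\tilde T_i^0=T_i$ if $|T_i|\le|T_i^0|$ and $\tilde T_i^0=T_i^0$ otherwise, $\hat f_0(t)=\frac{1}{2m}\big[\sum_{i=1}^mK_{h_0}(t-\tilde T^0_i)+\sum_{i=1}^mK_{h_0}(t+\tilde T^0_i)\big]$, where $h_0$ is a function of $(\tilde{\mathbf{T}}^0,-\tilde{\mathbf{T}}^0)$ invariant under permutations of its $2m$ entries; (JC) with $(X_1,\dots,X_{2m})=(T_1,\dots,T_m,T^0_1,\dots,T^0_m)$, $\varphi_{2m}(s)=\frac1{2m}\sum_{j=1}^{2m}e^{\mathrm{i}sX_j}$,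 a fixed $\gamma\in(0,1/2)$, $\hat s=\inf\{s\in[0,\log(2m)]:|\varphi_{2m}(s)|=(2m)^{-\gamma}\}$, $\hat\sigma_0^2=-\frac{\frac{d}{ds}|\varphi_{2m}(s)|}{s|\varphi_{2m}(s)|}\big|_{s=\hat s}$, $\hat\mu_0=\frac{\mathrm{Re}(\varphi_{2m}(s))\mathrm{Im}(\varphi_{2m}'(s))-\mathrm{Re}(\varphi_{2m}'(s))\mathrm{Im}(\varphi_{2m}(s))}{|\varphi_{2m}(s)|^2}\big|_{s=\hat s}$, and $\hat f_0(t)=\phi_{\hat\sigma_0}(t-\hat\mu_0)$, the $\mathcal N(\hat\mu_0,\hat\sigma_0^2)$ density. Then $U_i=g(T_i)$ and $U_i^0=g(T_i^0)$ satisfy, for every $i\in\mathcal{H}_0$, $$(U_i,U_i^0\mid\mathbf{U}_{-i},\mathbf{U}^0_{-i})\stackrel{d}{=}(U_i^0,U_i\mid\mathbf{U}_{-i},\mathbf{U}^0_{-i}).$$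
   Context: $\mathbf{a}_{-i}$ denotes a vector with its $i$-th entry removed. In the paper $(\mathbf{T},\mathbf{T}^0)$ are the test and calibration samples produced by its one- or two-sample construction, which satisfy the stated null pairwise exchangeability. *)

theory Defs
  imports "HOL-Probability.Probability"
begin

text \<open>Data: the pair (T, T0) of random vectors indexed by the finite type 'm, so m = CARD('m).\<close>

datatype est = KN | JC

definition swap_at :: "'m \<Rightarrow> ((real^'m) \<times> (real^'m)) \<Rightarrow> ((real^'m) \<times> (real^'m))" where
  "swap_at i z = ((\<chi> j. if j = i then snd z $ j else fst z $ j),
                  (\<chi> j. if j = i then fst z $ j else snd z $ j))"

text \<open>The 2m entries of a pair of vectors, indexed by 'm \<times> bool (True: first vector).\<close>
definition entries :: "((real^'m) \<times> (real^'m)) \<Rightarrow> ('m \<times> bool \<Rightarrow> real)" where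
  "entries z = (\<lambda>(j, b). if b then fst z $ j else snd z $ j)"

definition of_entries :: "('m \<times> bool \<Rightarrow> real) \<Rightarrow> ((real^'m) \<times> (real^'m))" where
  "of_entries f = ((\<chi> j. f (j, True)), (\<chi> j. f (j, False)))"

definition perm_invariant :: "(((real^'m) \<times> (real^'m)) \<Rightarrow> real) \<Rightarrow> bool" where
  "perm_invariant h \<longleftrightarrow>
     (\<forall>p z. p permutes (UNIV :: ('m \<times> bool) set) \<longrightarrow> h (of_entries (entries z \<circ> p)) = h z)"

definition Kh :: "(real \<Rightarrow> real) \<Rightarrow> real \<Rightarrow> real \<Rightarrow> real" where
  "Kh K h t = inverse h * K (t / h)"

definition fmix_hat :: "(real \<Rightarrow> real) \<Rightarrow> (((real^'m) \<times> (real^'m)) \<Rightarrow> real)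
    \<Rightarrow> ((real^'m) \<times> (real^'m)) \<Rightarrow> real \<Rightarrow> real" where
  "fmix_hat K hmix z t =
     1 / (2 * real CARD('m)) *
     (\<Sum>i\<in>UNIV. Kh K (hmix z) (t - fst z $ i) + Kh K (hmix z) (t - snd z $ i))"

definition Ttilde0 :: "((real^'m) \<times> (real^'m)) \<Rightarrow> real^'m" where
  "Ttilde0 z = (\<chi> i. if \<bar>fst z $ i\<bar> \<le> \<bar>snd z $ i\<bar> then fst z $ i else snd z $ i)"

definition f0_KN :: "(real \<Rightarrow> real) \<Rightarrow> (((real^'m) \<times> (real^'m)) \<Rightarrow> real)
    \<Rightarrow> ((real^'m) \<times> (real^'m)) \<Rightarrow> real \<Rightarrow> real" where
  "f0_KN K h0 z t =
     (let tt = Ttilde0 z; h = h0 (tt, - tt) in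
       1 / (2 * real CARD('m)) *
       ((\<Sum>i\<in>UNIV. Kh K h (t - tt $ i)) + (\<Sum>i\<in>UNIV. Kh K h (t + tt $ i))))"

definition phi_emp :: "((real^'m) \<times> (real^'m)) \<Rightarrow> real \<Rightarrow> complex" where
  "phi_emp z s = 1 / (2 * of_nat CARD('m)) *
     (\<Sum>i\<in>UNIV. exp (\<i> * of_real (s * fst z $ i)) + exp (\<i> * of_real (s * snd z $ i)))"

definition s_hat :: "real \<Rightarrow> ((real^'m) \<times> (real^'m)) \<Rightarrow> real" where
  "s_hat \<gamma> z = Inf {s \<in> {0 .. ln (2 * real CARD('m))}.
                     cmod (phi_emp z s) = (2 * real CARD('m)) powr (- \<gamma>)}"

definition sigma2_hat :: "real \<Rightarrow> ((real^'m) \<times> (real^'m)) \<Rightarrow> real" where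
  "sigma2_hat \<gamma> z = (let s = s_hat \<gamma> z in
     - deriv (\<lambda>u. cmod (phi_emp z u)) s / (s * cmod (phi_emp z s)))"

definition mu_hat :: "real \<Rightarrow> ((real^'m) \<times> (real^'m)) \<Rightarrow> real" where
  "mu_hat \<gamma> z = (let s = s_hat \<gamma> z; p = phi_emp z s;
                       p' = vector_derivative (phi_emp z) (at s) in
     (Re p * Im p' - Re p' * Im p) / (cmod p)\<^sup>2)"

definition f0_JC :: "real \<Rightarrow> ((real^'m) \<times> (real^'m)) \<Rightarrow> real \<Rightarrow> real" where
  "f0_JC \<gamma> z t = normal_density (mu_hat \<gamma> z) (sqrt (sigma2_hat \<gamma> z)) t"

definition f0_hat :: "est \<Rightarrow> (real \<Rightarrow> real) \<Rightarrow> (((real^'m) \<times> (real^'m)) \<Rightarrow> real) \<Rightarrow> real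
    \<Rightarrow> ((real^'m) \<times> (real^'m)) \<Rightarrow> real \<Rightarrow> real" where
  "f0_hat e K h0 \<gamma> z t = (case e of KN \<Rightarrow> f0_KN K h0 z t | JC \<Rightarrow> f0_JC \<gamma> z t)"

definition g_hat :: "est \<Rightarrow> (real \<Rightarrow> real) \<Rightarrow> (((real^'m) \<times> (real^'m)) \<Rightarrow> real)
    \<Rightarrow> (((real^'m) \<times> (real^'m)) \<Rightarrow> real) \<Rightarrow> real \<Rightarrow> ((real^'m) \<times> (real^'m)) \<Rightarrow> real \<Rightarrow> real" where
  "g_hat e K hmix h0 \<gamma> z t = f0_hat e K h0 \<gamma> z t / fmix_hat K hmix z t"

definition UU :: "est \<Rightarrow> (real \<Rightarrow> real) \<Rightarrow> (((real^'m) \<times> (real^'m)) \<Rightarrow> real)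
    \<Rightarrow> (((real^'m) \<times> (real^'m)) \<Rightarrow> real) \<Rightarrow> real \<Rightarrow> ((real^'m) \<times> (real^'m)) \<Rightarrow> ((real^'m) \<times> (real^'m))" where
  "UU e K hmix h0 \<gamma> z =
     ((\<chi> j. g_hat e K hmix h0 \<gamma> z (fst z $ j)), (\<chi> j. g_hat e K hmix h0 \<gamma> z (snd z $ j)))"

end

theory Submission
  imports Defs
begin

(* Swapping T_i and T0_i permutes the 2m pooled observations, and every ingredient of g is
   invariant under it: f_mix and the empirical characteristic function behind (JC) are symmetric
   in the pooled sample, and (KN) only sees the folded sample (T~0, -T~0), which the swap either
   leaves alone or changes by transposing its i-th entries (when T_i = -T0_i and the tie in
   |T_i| <= |T0_i| is broken the other way).  Hence (U, U0) = Phi (T, T0) for a map Phi with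
   Phi o swap_i = swap_i o Phi, and the exchangeability of (T, T0) is pushed forward to (U, U0).
   What remains is that Phi is Borel: s_hat is the infimum of a section of a closed set, and the
   derivative of |phi| has an explicit formula, junk value included. *)

lemma distr_eq_if_commuting:
  assumes Z: "Z \<in> M \<rightarrow>\<^sub>M N" and S: "S \<in> N \<rightarrow>\<^sub>M N" and \<Phi>: "\<Phi> \<in> N \<rightarrow>\<^sub>M L"
    and law: "distr M N Z = distr M N (\<lambda>\<omega>. S (Z \<omega>))"
    and comm: "\<And>z. z \<in> space N \<Longrightarrow> \<Phi> (S z) = S' (\<Phi> z)"
  shows "distr M L (\<lambda>\<omega>. \<Phi> (Z \<omega>)) = distr M L (\<lambda>\<omega>. S' (\<Phi> (Z \<omega>)))"
proof -
  have "distr M L (\<lambda>\<omega>. \<Phi> (Z \<omega>)) = distr (distr M N Z) L \<Phi>"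
    using distr_distr[OF \<Phi> Z] by (simp add: comp_def)
  also have "\<dots> = distr (distr M N (\<lambda>\<omega>. S (Z \<omega>))) L \<Phi>"
    by (simp add: law)
  also have "\<dots> = distr M L (\<lambda>\<omega>. \<Phi> (S (Z \<omega>)))"
    using distr_distr[OF \<Phi> measurable_compose[OF Z S]] by (simp add: comp_def)
  also have "\<dots> = distr M L (\<lambda>\<omega>. S' (\<Phi> (Z \<omega>)))"
    by (rule distr_cong) (auto simp: comm measurable_space[OF Z])
  finally show ?thesis .
qed

lemma tendsto_norm_difference_quotient:
  fixes f :: "real \<Rightarrow> 'a::real_normed_vector"
  assumes "(f has_vector_derivative f') (at s)"
  shows "((\<lambda>y. norm (f y - f s) / \<bar>y - s\<bar>) \<longlongrightarrow> norm f') (at s)"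
proof -
  have "((\<lambda>y. norm (f y - f s - (y - s) *\<^sub>R f') / \<bar>y - s\<bar>) \<longlongrightarrow> 0) (at s)"
    using assms by (simp add: has_vector_derivative_def has_derivative_iff_norm)
  moreover have "norm (f y - f s - (y - s) *\<^sub>R f') / \<bar>y - s\<bar> = norm ((f y - f s) /\<^sub>R (y - s) - f')"
    if "y \<noteq> s" for y
  proof -
    have "f y - f s - (y - s) *\<^sub>R f' = (y - s) *\<^sub>R ((f y - f s) /\<^sub>R (y - s) - f')"
      using that by (simp add: scaleR_right_diff_distrib)
    then show ?thesis using that by simp
  qed
  ultimately have "((\<lambda>y. norm ((f y - f s) /\<^sub>R (y - s) - f')) \<longlongrightarrow> 0) (at s)"
    by (rule Lim_transform_within[OF _ zero_less_one]) (auto simp: dist_norm)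
  then have "((\<lambda>y. (f y - f s) /\<^sub>R (y - s)) \<longlongrightarrow> f') (at s)"
    by (simp add: tendsto_norm_zero_iff LIM_zero_iff)
  then have "((\<lambda>y. norm ((f y - f s) /\<^sub>R (y - s))) \<longlongrightarrow> norm f') (at s)"
    by (rule tendsto_norm)
  then show ?thesis
    by (simp add: divide_inverse_commute)
qed

(* SOME D. False is what deriv returns where no derivative exists, i.e. for p = 0 \<noteq> p'. *)
definition norm_deriv :: "'a::real_inner \<Rightarrow> 'a \<Rightarrow> real" where
  "norm_deriv p p' = (if p \<noteq> 0 then p' \<bullet> sgn p else if p' = 0 then 0 else (SOME D. False))"

lemma deriv_norm_eq_norm_deriv:
  fixes f :: "real \<Rightarrow> 'a::real_inner"
  assumes f: "(f has_vector_derivative f') (at s)"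
  shows "deriv (\<lambda>u. norm (f u)) s = norm_deriv (f s) f'"
proof (cases "f s = 0")
  case False
  have "((\<lambda>u. norm (f u)) has_derivative (\<lambda>h. (h *\<^sub>R f') \<bullet> sgn (f s))) (at s)"
    using has_derivative_compose[OF f[unfolded has_vector_derivative_def] has_derivative_norm[OF False]]
    by simp
  then have "((\<lambda>u. norm (f u)) has_field_derivative f' \<bullet> sgn (f s)) (at s)"
    unfolding has_field_derivative_def by (rule has_derivative_eq_rhs) (simp add: fun_eq_iff)
  then show ?thesis
    using False by (simp add: norm_deriv_def DERIV_imp_deriv)
next
  case True
  have quotient: "((\<lambda>y. \<bar>norm (f y) / (y - s)\<bar>) \<longlongrightarrow> norm f') (at s)"
    using tendsto_norm_difference_quotient[OF f] True by simp
  have f'_zero_if_differentiable: "f' = 0"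
    if "((\<lambda>u. norm (f u)) has_field_derivative D) (at s)" for D
  proof -
    have "D = 0"
      using DERIV_local_min[OF that zero_less_one] True by simp
    with that True have "((\<lambda>y. norm (f y) / (y - s)) \<longlongrightarrow> 0) (at s)"
      by (simp add: has_field_derivative_iff)
    then have "((\<lambda>y. \<bar>norm (f y) / (y - s)\<bar>) \<longlongrightarrow> 0) (at s)"
      by (rule tendsto_rabs_zero)
    with quotient show "f' = 0"
      using tendsto_unique[OF trivial_limit_at] by fastforce
  qed
  show ?thesis
  proof (cases "f' = 0")
    case f'_zero: True
    have "((\<lambda>y. norm (f y) / (y - s)) \<longlongrightarrow> 0) (at s)"
      using quotient[unfolded f'_zero norm_zero] by (rule tendsto_rabs_zero_cancel)
    then have "((\<lambda>u. norm (f u)) has_field_derivative 0) (at s)"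
      using True by (simp add: has_field_derivative_iff)
    then show ?thesis
      using True f'_zero by (simp add: norm_deriv_def DERIV_imp_deriv)
  next
    case False
    with f'_zero_if_differentiable have "deriv (\<lambda>u. norm (f u)) s = (SOME D. False)"
      unfolding deriv_def by metis
    then show ?thesis
      using True False by (simp add: norm_deriv_def)
  qed
qed

lemma borel_measurable_norm_deriv [measurable (raw)]:
  fixes p q :: "'b \<Rightarrow> 'a::{real_inner, second_countable_topology}"
  assumes "p \<in> borel_measurable M" "q \<in> borel_measurable M"
  shows "(\<lambda>x. norm_deriv (p x) (q x)) \<in> borel_measurable M"
  unfolding norm_deriv_def using assms by measurable

lemma borel_measurable_Inf_closed_section:
  fixes C :: "(real \<times> 'a::euclidean_space) set"
  assumes "closed C"
  shows "(\<lambda>z. Inf {s \<in> {a..b}. (s, z) \<in> C}) \<in> borel_measurable borel"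
proof -
  define A where "A c = {z. \<exists>s. s \<in> {a..c} \<and> (s, z) \<in> C}" for c
  have closed_A: "closed (A c)" for c
    unfolding A_def using closed_compact_projection[OF compact_Icc assms] .
  \<comment> \<open>The term with Inf {} covers the empty sections, on which Inf is unspecified.\<close>
  have "{z. Inf {s \<in> {a..b}. (s, z) \<in> C} \<le> c}
          = A (min c b) \<union> (if Inf {} \<le> c then - A b else {})" for c
  proof (intro set_eqI)
    fix z
    define S where "S = {s \<in> {a..b}. (s, z) \<in> C}"
    have "closed ((\<lambda>s. (s, z)) -` C)"
      by (intro continuous_closed_vimage assms continuous_intros)
    moreover have "S = {a..b} \<inter> (\<lambda>s. (s, z)) -` C"
      unfolding S_def by auto
    ultimately have "closed S"
      by (simp add: closed_Int)
    moreover have "bdd_below S"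
      unfolding S_def by (rule bdd_belowI[of _ a]) auto
    ultimately have "S \<noteq> {} \<Longrightarrow> Inf S \<in> S"
      using closed_contains_Inf by blast
    moreover have "Inf S \<le> s" if "s \<in> S" for s
      using that \<open>bdd_below S\<close> by (rule cInf_lower)
    moreover have "z \<in> A t \<longleftrightarrow> (\<exists>s\<in>S. s \<le> t)" if "t \<le> b" for t
      using that unfolding A_def S_def by auto
    moreover have "s \<le> b" if "s \<in> S" for s
      using that unfolding S_def by auto
    ultimately have "Inf S \<le> c \<longleftrightarrow> z \<in> A (min c b) \<union> (if Inf {} \<le> c then - A b else {})"
      by (cases "S = {}") (auto intro: order_trans)
    then show "z \<in> {z. Inf {s \<in> {a..b}. (s, z) \<in> C} \<le> c} \<longleftrightarrow>
        z \<in> A (min c b) \<union> (if Inf {} \<le> c then - A b else {})"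
      by (simp add: S_def)
  qed
  then show ?thesis
    unfolding borel_measurable_iff_le using closed_A by (auto intro!: borel_closed)
qed

lemma borel_measurable_fst' [measurable (raw)]:
  fixes f :: "'c \<Rightarrow> 'a::topological_space \<times> 'b::topological_space"
  shows "f \<in> borel_measurable M \<Longrightarrow> (\<lambda>x. fst (f x)) \<in> borel_measurable M"
  by (erule measurable_compose) (intro borel_measurable_continuous_onI continuous_intros)

lemma borel_measurable_snd' [measurable (raw)]:
  fixes f :: "'c \<Rightarrow> 'a::topological_space \<times> 'b::topological_space"
  shows "f \<in> borel_measurable M \<Longrightarrow> (\<lambda>x. snd (f x)) \<in> borel_measurable M"
  by (erule measurable_compose) (intro borel_measurable_continuous_onI continuous_intros)

lemma borel_measurable_vec_nth' [measurable (raw)]: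
  "f \<in> borel_measurable M \<Longrightarrow> (\<lambda>x. f x $ i :: real) \<in> borel_measurable M"
  by (erule measurable_compose) (rule borel_measurable_nth)

lemma borel_measurable_vec_lambda [measurable (raw)]:
  fixes f :: "'m::finite \<Rightarrow> 'a \<Rightarrow> real"
  assumes "\<And>j. f j \<in> borel_measurable M"
  shows "(\<lambda>x. \<chi> j. f j x) \<in> borel_measurable M"
  using assms
  by (subst borel_measurable_euclidean_space) (auto simp: Basis_vec_def cart_eq_inner_axis[symmetric])

lemma fst_swap_at_nth [simp]: "fst (swap_at i z) $ j = (if j = i then snd z $ j else fst z $ j)"
  by (simp add: swap_at_def)

lemma snd_swap_at_nth [simp]: "snd (swap_at i z) $ j = (if j = i then fst z $ j else snd z $ j)"
  by (simp add: swap_at_def)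

lemma sum_swap_at:
  assumes "\<And>a b. F a b = F b a"
  shows "(\<Sum>j\<in>UNIV. F (fst (swap_at i z) $ j) (snd (swap_at i z) $ j))
       = (\<Sum>j\<in>UNIV. F (fst z $ j) (snd z $ j))"
  by (rule sum.cong) (auto simp: assms)

lemma perm_invariant_swap_at:
  assumes "perm_invariant h"
  shows "h (swap_at i z) = h z"
proof -
  let ?p = "Transposition.transpose (i, True) (i, False)"
  have "?p permutes UNIV"
    by (rule permutes_swap_id) auto
  moreover have "of_entries (entries z \<circ> ?p) = swap_at i z"
    by (auto simp: of_entries_def entries_def swap_at_def vec_eq_iff Transposition.transpose_def)
  ultimately show ?thesis
    using assms unfolding perm_invariant_def by metis
qed

lemma fmix_hat_swap_at:
  assumes "perm_invariant h"
  shows "fmix_hat K h (swap_at i z) t = fmix_hat K h z t"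
  unfolding fmix_hat_def perm_invariant_swap_at[OF assms]
  by (subst sum_swap_at) (simp_all add: add.commute)

lemma phi_emp_swap_at: "phi_emp (swap_at i z) = phi_emp z"
  unfolding phi_emp_def fun_eq_iff by (subst sum_swap_at) (simp_all add: add.commute)

lemma f0_JC_swap_at: "f0_JC \<gamma> (swap_at i z) t = f0_JC \<gamma> z t"
  by (simp add: f0_JC_def mu_hat_def sigma2_hat_def s_hat_def phi_emp_swap_at)

lemma f0_KN_eq_fmix_hat: "f0_KN K h0 z t = fmix_hat K h0 (Ttilde0 z, - Ttilde0 z) t"
  by (simp add: f0_KN_def fmix_hat_def Let_def sum.distrib)

lemma Ttilde0_swap_at:
  "(Ttilde0 (swap_at i z), - Ttilde0 (swap_at i z))
     \<in> {(Ttilde0 z, - Ttilde0 z), swap_at i (Ttilde0 z, - Ttilde0 z)}"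
proof (cases "fst z $ i = snd z $ i \<or> \<bar>fst z $ i\<bar> \<noteq> \<bar>snd z $ i\<bar>")
  case True
  then have "Ttilde0 (swap_at i z) = Ttilde0 z"
    by (auto simp: Ttilde0_def vec_eq_iff)
  then show ?thesis
    by simp
next
  case False
  then have "snd z $ i = - fst z $ i"
    by (auto simp: abs_eq_iff)
  then have "(Ttilde0 (swap_at i z), - Ttilde0 (swap_at i z)) = swap_at i (Ttilde0 z, - Ttilde0 z)"
    by (auto simp: Ttilde0_def swap_at_def vec_eq_iff)
  then show ?thesis
    by simp
qed

lemma f0_KN_swap_at:
  assumes "perm_invariant h0"
  shows "f0_KN K h0 (swap_at i z) t = f0_KN K h0 z t"
  using Ttilde0_swap_at[of i z]
  by (auto simp: f0_KN_eq_fmix_hat fmix_hat_swap_at[OF assms])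

lemma g_hat_swap_at:
  assumes "perm_invariant hmix" "perm_invariant h0"
  shows "g_hat e K hmix h0 \<gamma> (swap_at i z) t = g_hat e K hmix h0 \<gamma> z t"
  by (cases e) (simp_all add: g_hat_def f0_hat_def fmix_hat_swap_at f0_KN_swap_at f0_JC_swap_at assms)

lemma UU_swap_at:
  assumes "perm_invariant hmix" "perm_invariant h0"
  shows "UU e K hmix h0 \<gamma> (swap_at i z) = swap_at i (UU e K hmix h0 \<gamma> z)"
  unfolding UU_def g_hat_swap_at[OF assms] by (auto simp: swap_at_def vec_eq_iff)

definition phi_emp_deriv :: "((real^'m) \<times> (real^'m)) \<Rightarrow> real \<Rightarrow> complex" where
  "phi_emp_deriv z s = 1 / (2 * of_nat CARD('m)) *
     (\<Sum>i\<in>UNIV. \<i> * of_real (fst z $ i) * exp (\<i> * of_real (s * fst z $ i))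
               + \<i> * of_real (snd z $ i) * exp (\<i> * of_real (s * snd z $ i)))"

lemma phi_emp_has_vector_derivative:
  fixes z :: "(real^'m) \<times> (real^'m)"
  shows "(phi_emp z has_vector_derivative phi_emp_deriv z s) (at s)"
proof -
  define F where "F w = 1 / (2 * of_nat CARD('m)) *
     (\<Sum>i\<in>UNIV. exp (\<i> * (w * of_real (fst z $ i))) + exp (\<i> * (w * of_real (snd z $ i))))"
    for w :: complex
  have "(F has_field_derivative phi_emp_deriv z s) (at (of_real s))"
    unfolding F_def phi_emp_deriv_def
    by (auto intro!: derivative_eq_intros simp: algebra_simps)
  then have "((\<lambda>x. F (of_real x)) has_vector_derivative phi_emp_deriv z s) (at s)"
    by (rule has_vector_derivative_real_field)
  moreover have "(\<lambda>x. F (of_real x)) = phi_emp z"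
    by (simp add: fun_eq_iff F_def phi_emp_def mult.commute)
  ultimately show ?thesis
    by simp
qed

lemma sigma2_hat_eq:
  "sigma2_hat \<gamma> z = - norm_deriv (phi_emp z (s_hat \<gamma> z)) (phi_emp_deriv z (s_hat \<gamma> z))
                       / (s_hat \<gamma> z * cmod (phi_emp z (s_hat \<gamma> z)))"
  by (simp add: sigma2_hat_def Let_def deriv_norm_eq_norm_deriv[OF phi_emp_has_vector_derivative])

lemma mu_hat_eq:
  "mu_hat \<gamma> z = (let p = phi_emp z (s_hat \<gamma> z); p' = phi_emp_deriv z (s_hat \<gamma> z) in
                     (Re p * Im p' - Re p' * Im p) / (cmod p)\<^sup>2)"
  by (simp add: mu_hat_def Let_def vector_derivative_at[OF phi_emp_has_vector_derivative])

lemma borel_measurable_s_hat [measurable (raw)]: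
  fixes z :: "'a \<Rightarrow> (real^'m) \<times> (real^'m)"
  assumes "z \<in> borel_measurable M"
  shows "(\<lambda>x. s_hat \<gamma> (z x)) \<in> borel_measurable M"
proof -
  have "closed {x :: real \<times> ((real^'m) \<times> (real^'m)).
                  cmod (phi_emp (snd x) (fst x)) = (2 * real CARD('m)) powr (- \<gamma>)}"
    unfolding phi_emp_def by (intro closed_Collect_eq continuous_intros)
  from borel_measurable_Inf_closed_section[OF this, of 0 "ln (2 * real CARD('m))"]
  have "s_hat \<gamma> \<in> borel_measurable (borel :: ((real^'m) \<times> (real^'m)) measure)"
    by (simp add: s_hat_def[abs_def])
  with assms show ?thesis
    by (rule measurable_compose)
qed

lemma borel_measurable_phi_emp [measurable (raw)]:
  fixes z :: "'a \<Rightarrow> (real^'m) \<times> (real^'m)"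
  assumes [measurable]: "z \<in> borel_measurable M" "s \<in> borel_measurable M"
  shows "(\<lambda>x. phi_emp (z x) (s x)) \<in> borel_measurable M"
  unfolding phi_emp_def by measurable

lemma borel_measurable_phi_emp_deriv [measurable (raw)]:
  fixes z :: "'a \<Rightarrow> (real^'m) \<times> (real^'m)"
  assumes [measurable]: "z \<in> borel_measurable M" "s \<in> borel_measurable M"
  shows "(\<lambda>x. phi_emp_deriv (z x) (s x)) \<in> borel_measurable M"
  unfolding phi_emp_deriv_def by measurable

lemma borel_measurable_f0_JC [measurable (raw)]:
  fixes z :: "'a \<Rightarrow> (real^'m) \<times> (real^'m)"
  assumes [measurable]: "z \<in> borel_measurable M" "t \<in> borel_measurable M"
  shows "(\<lambda>x. f0_JC \<gamma> (z x) (t x)) \<in> borel_measurable M"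
  unfolding f0_JC_def normal_density_def sigma2_hat_eq mu_hat_eq Let_def by measurable

lemma borel_measurable_fmix_hat [measurable (raw)]:
  fixes z :: "'a \<Rightarrow> (real^'m) \<times> (real^'m)"
  assumes [measurable]: "K \<in> borel_measurable borel" "h \<in> borel_measurable borel"
    and [measurable]: "z \<in> borel_measurable M" "t \<in> borel_measurable M"
  shows "(\<lambda>x. fmix_hat K h (z x) (t x)) \<in> borel_measurable M"
  unfolding fmix_hat_def Kh_def by measurable

lemma borel_measurable_f0_KN [measurable (raw)]:
  fixes z :: "'a \<Rightarrow> (real^'m) \<times> (real^'m)"
  assumes [measurable]: "K \<in> borel_measurable borel" "h0 \<in> borel_measurable borel"
    and [measurable]: "z \<in> borel_measurable M" "t \<in> borel_measurable M"
  shows "(\<lambda>x. f0_KN K h0 (z x) (t x)) \<in> borel_measurable M"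
  unfolding f0_KN_eq_fmix_hat Ttilde0_def by measurable

lemma borel_measurable_UU:
  assumes [measurable]: "K \<in> borel_measurable borel"
    "hmix \<in> borel_measurable borel" "h0 \<in> borel_measurable borel"
  shows "UU e K hmix h0 \<gamma> \<in> borel_measurable borel"
  by (cases e) (simp_all add: UU_def[abs_def] g_hat_def f0_hat_def)

lemma borel_measurable_swap_at: "swap_at i \<in> borel_measurable borel"
  unfolding swap_at_def[abs_def] by measurable

theorem proposition2:
  fixes M :: "'a measure" and T T0 :: "'a \<Rightarrow> real^'m" and H0 :: "'m set"
    and K :: "real \<Rightarrow> real" and hmix h0 :: "((real^'m) \<times> (real^'m)) \<Rightarrow> real"
    and \<gamma> :: real and e :: est
  assumes "prob_space M"
    and "T \<in> borel_measurable M" and "T0 \<in> borel_measurable M"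
    and exch: "\<forall>i\<in>H0. distr M borel (\<lambda>\<omega>. (T \<omega>, T0 \<omega>))
                      = distr M borel (\<lambda>\<omega>. swap_at i (T \<omega>, T0 \<omega>))"
    and K_sym: "\<forall>t. K (- t) = K t"
    and K_int: "integrable lborel K" and K_one: "(\<integral>t. K t \<partial>lborel) = 1"
    and K_mean: "integrable lborel (\<lambda>t. t * K t)" "(\<integral>t. t * K t \<partial>lborel) = 0"
    and K_var: "integrable lborel (\<lambda>t. t\<^sup>2 * K t)"
    and hmix_inv: "perm_invariant hmix" and hmix_meas: "hmix \<in> borel_measurable borel"
    and h0_inv: "perm_invariant h0" and h0_meas: "h0 \<in> borel_measurable borel"
    and "0 < \<gamma>" and "\<gamma> < 1/2"
  shows "\<forall>i\<in>H0. distr M borel (\<lambda>\<omega>. UU e K hmix h0 \<gamma> (T \<omega>, T0 \<omega>))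
              = distr M borel (\<lambda>\<omega>. swap_at i (UU e K hmix h0 \<gamma> (T \<omega>, T0 \<omega>)))"
proof (intro ballI)
  fix i
  assume "i \<in> H0"
  have K_meas: "K \<in> borel_measurable borel"
    using borel_measurable_integrable[OF K_int] by simp
  show "distr M borel (\<lambda>\<omega>. UU e K hmix h0 \<gamma> (T \<omega>, T0 \<omega>))
      = distr M borel (\<lambda>\<omega>. swap_at i (UU e K hmix h0 \<gamma> (T \<omega>, T0 \<omega>)))"
  proof (rule distr_eq_if_commuting[where Z = "\<lambda>\<omega>. (T \<omega>, T0 \<omega>)" and \<Phi> = "UU e K hmix h0 \<gamma>"
                                      and S = "swap_at i" and S' = "swap_at i"])
    show "(\<lambda>\<omega>. (T \<omega>, T0 \<omega>)) \<in> borel_measurable M"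
      using assms(2,3) by (rule borel_measurable_Pair)
    show "distr M borel (\<lambda>\<omega>. (T \<omega>, T0 \<omega>)) = distr M borel (\<lambda>\<omega>. swap_at i (T \<omega>, T0 \<omega>))"
      using exch \<open>i \<in> H0\<close> by blast
  qed (simp_all add: borel_measurable_swap_at borel_measurable_UU K_meas hmix_meas h0_meas
                     UU_swap_at hmix_inv h0_inv)
qed

end
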